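(* Let $X$ be a shift space over a finite alphabet. If $X$ is balanced, then $X$ is boundedly supermultiplicative.
   Context: For a shift space $X\subseteq\mathcal{A}^{\mathbb{Z}}$ ($\mathcal{A}$ finite), $\mathcal{B}_n(X)$ denotes the set of words of length $n$ appearing in points of $X$, and $\mathcal{B}(X)=\bigcup_{n\ge1}\mathcal{B}_n(X)$. For $\omega\in\mathcal{B}(X)$ and $r\in\mathbb{N}$, $\mathcal{B}_{\omega,r}(X)$ is the set of words $u$ of length $r$ such that $\omega u\in\mathcal{B}(X)$. $X$ is boundedly supermultiplicative (BSM) if there is $K\ge1$ with $|\mathcal{B}_m(X)|\cdot|\mathcal{B}_n(X)|\le K|\mathcal{B}_{m+n}(X)|$ for all $m,n\ge1$. $X$ is balanced if there is $B>0$ such that $|\mathcal{B}_{\omega,r}(X)|/|\mathcal{B}_r(X)|\ge B$ for every $\omega\in\mathcal{B}(X)$ and every $r\in\mathbb{N}$. *)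

theory Defs
  imports "HOL-Analysis.Analysis"
begin

definition shift_map :: "(int \<Rightarrow> 'a) \<Rightarrow> (int \<Rightarrow> 'a)" where
  "shift_map x = (\<lambda>i. x (i + 1))"

definition shift_space :: "(int \<Rightarrow> 'a::finite) set \<Rightarrow> bool" where
  "shift_space X \<longleftrightarrow>
     closedin (product_topology (\<lambda>_::int. discrete_topology (UNIV::'a set)) UNIV) X
     \<and> shift_map ` X = X"

definition word_at :: "(int \<Rightarrow> 'a) \<Rightarrow> int \<Rightarrow> nat \<Rightarrow> 'a list" where
  "word_at x i n = map (\<lambda>k. x (i + int k)) [0..<n]"

definition lang_n :: "(int \<Rightarrow> 'a) set \<Rightarrow> nat \<Rightarrow> 'a list set" where
  "lang_n X n = {w. \<exists>x\<in>X. \<exists>i. w = word_at x i n}"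

definition lang :: "(int \<Rightarrow> 'a) set \<Rightarrow> 'a list set" where
  "lang X = (\<Union>n\<in>{1..}. lang_n X n)"

definition follower_words :: "(int \<Rightarrow> 'a) set \<Rightarrow> 'a list \<Rightarrow> nat \<Rightarrow> 'a list set" where
  "follower_words X w r = {u. length u = r \<and> w @ u \<in> lang X}"

definition BSM :: "(int \<Rightarrow> 'a) set \<Rightarrow> bool" where
  "BSM X \<longleftrightarrow> (\<exists>K::real. K \<ge> 1 \<and> (\<forall>m n. m \<ge> 1 \<longrightarrow> n \<ge> 1 \<longrightarrow>
      real (card (lang_n X m)) * real (card (lang_n X n)) \<le> K * real (card (lang_n X (m + n)))))"

definition balanced :: "(int \<Rightarrow> 'a) set \<Rightarrow> bool" where
  "balanced X \<longleftrightarrow> (\<exists>B::real. B > 0 \<and> (\<forall>w\<in>lang X. \<forall>r. r \<ge> 1 \<longrightarrow>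
      real (card (follower_words X w r)) / real (card (lang_n X r)) \<ge> B))"

end

theory Submission
  imports Defs
begin

text \<open>Concatenation injects the pairs (w, u) with w \<in> B_m(X) and u \<in> B_{w,n}(X) into B_{m+n}(X),
  so |B_{m+n}(X)| \<ge> \<Sum>_{w \<in> B_m(X)} |B_{w,n}(X)|. Balancedness bounds every summand from below by
  B |B_n(X)|, whence |B_m(X)| |B_n(X)| \<le> B\<inverse> |B_{m+n}(X)|.\<close>

lemma length_word_at [simp]: "length (word_at x i n) = n"
  by (simp add: word_at_def)

lemma length_lang_n: "w \<in> lang_n X n \<Longrightarrow> length w = n"
  by (auto simp: lang_n_def)

lemma lang_n_subset_lang: "n \<ge> 1 \<Longrightarrow> lang_n X n \<subseteq> lang X"
  by (auto simp: lang_def)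

lemma lang_imp_lang_n_length: "w \<in> lang X \<Longrightarrow> w \<in> lang_n X (length w)"
  unfolding lang_def by (metis UN_E length_lang_n)

lemma finite_lists_length_eq_UNIV: "finite {xs :: 'a::finite list. length xs = n}"
  using finite_lists_length_eq[of "UNIV :: 'a set" n] by simp

lemma finite_lang_n: "finite (lang_n (X :: (int \<Rightarrow> 'a::finite) set) n)"
  by (rule finite_subset[OF _ finite_lists_length_eq_UNIV[of n]]) (auto dest: length_lang_n)

lemma finite_follower_words: "finite (follower_words (X :: (int \<Rightarrow> 'a::finite) set) w r)"
  by (rule finite_subset[OF _ finite_lists_length_eq_UNIV[of r]]) (auto simp: follower_words_def)

lemma append_follower_words_in_lang_n:
  assumes "w \<in> lang_n X m" and "u \<in> follower_words X w n"
  shows "w @ u \<in> lang_n X (m + n)"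
  using assms lang_imp_lang_n_length[of "w @ u" X]
  by (auto simp: follower_words_def dest: length_lang_n)

lemma sum_card_follower_words_le:
  fixes X :: "(int \<Rightarrow> 'a::finite) set"
  shows "(\<Sum>w\<in>lang_n X m. card (follower_words X w n)) \<le> card (lang_n X (m + n))"
proof -
  let ?P = "Sigma (lang_n X m) (\<lambda>w. follower_words X w n)"
  have "inj_on (\<lambda>(w, u). w @ u) ?P"
    by (auto simp: inj_on_def length_lang_n)
  moreover have "(\<lambda>(w, u). w @ u) ` ?P \<subseteq> lang_n X (m + n)"
    by (auto intro: append_follower_words_in_lang_n)
  ultimately have "card ?P \<le> card (lang_n X (m + n))"
    using card_inj_on_le finite_lang_n by blast
  then show ?thesis
    by (simp add: finite_lang_n finite_follower_words)
qed

lemma balanced_card_follower_words_ge: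
  assumes "balanced X"
  obtains B :: real where "B > 0"
    and "\<And>w r. w \<in> lang X \<Longrightarrow> r \<ge> 1 \<Longrightarrow>
           B * card (lang_n X r) \<le> card (follower_words X w r)"
proof -
  obtain B :: real where "B > 0" and B: "\<And>w r. w \<in> lang X \<Longrightarrow> r \<ge> 1 \<Longrightarrow>
      B \<le> card (follower_words X w r) / card (lang_n X r)"
    using assms unfolding balanced_def by blast
  have "B * card (lang_n X r) \<le> card (follower_words X w r)"
    if "w \<in> lang X" "r \<ge> 1" for w r
    using B[OF that] by (cases "card (lang_n X r) = 0") (simp_all add: field_simps)
  with \<open>B > 0\<close> show thesis by (rule that)
qed

lemma card_lang_n_mult_le_if_follower_bound:
  fixes X :: "(int \<Rightarrow> 'a::finite) set" and B :: real
  assumes "B > 0"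
    and follower: "\<And>w. w \<in> lang_n X m \<Longrightarrow> B * card (lang_n X n) \<le> card (follower_words X w n)"
  shows "real (card (lang_n X m)) * card (lang_n X n) \<le> card (lang_n X (m + n)) / B"
proof -
  have "real (card (lang_n X m)) * card (lang_n X n) * B
          = (\<Sum>w\<in>lang_n X m. B * card (lang_n X n))"
    by simp
  also have "\<dots> \<le> (\<Sum>w\<in>lang_n X m. real (card (follower_words X w n)))"
    by (rule sum_mono) (rule follower)
  also have "\<dots> \<le> card (lang_n X (m + n))"
    unfolding of_nat_sum[symmetric] of_nat_le_iff by (rule sum_card_follower_words_le)
  finally show ?thesis
    using \<open>B > 0\<close> by (simp only: pos_le_divide_eq)
qed

theorem proposition3p6:
  fixes X :: "(int \<Rightarrow> 'a::finite) set"
  assumes "shift_space X"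
    and "balanced X"
  shows "BSM X"
proof -
  obtain B :: real where "B > 0" and follower: "\<And>w r. w \<in> lang X \<Longrightarrow> r \<ge> 1 \<Longrightarrow>
      B * card (lang_n X r) \<le> card (follower_words X w r)"
    using balanced_card_follower_words_ge[OF assms(2)] by blast
  define K where "K = max 1 (1 / B)"
  have "real (card (lang_n X m)) * card (lang_n X n) \<le> K * card (lang_n X (m + n))"
    if "m \<ge> 1" "n \<ge> 1" for m n
  proof -
    have "real (card (lang_n X m)) * card (lang_n X n) \<le> card (lang_n X (m + n)) / B"
      using \<open>n \<ge> 1\<close> lang_n_subset_lang[OF \<open>m \<ge> 1\<close>]
      by (intro card_lang_n_mult_le_if_follower_bound[OF \<open>B > 0\<close>] follower) auto
    also have "\<dots> \<le> K * card (lang_n X (m + n))"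
      using mult_right_mono[of "1 / B" K "real (card (lang_n X (m + n)))"]
      by (simp add: K_def)
    finally show ?thesis .
  qed
  then show ?thesis
    unfolding BSM_def by (intro exI[of _ K]) (simp add: K_def)
qed

end
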